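(* For nonnegative integers $p,q$, $G_2(p,q)=\binom{p+q+1}{q}\zeta(p+q+2)$, and if moreover $q\ge1$, then also $G_2(p,q)=G_2(q-1,p+1)$.
   Context: $\zeta(s)$ is the Riemann zeta function. For nonnegative integers $n,p,q$, $$G_{n+2}(p,q)=\sum_{1\le k_1<\cdots<k_{p+1}}\frac{1}{k_1\cdots k_p\,k_{p+1}^{n+2}}\sum_{1\le \ell_1\le\cdots\le\ell_q\le k_{p+1}}\frac{1}{\ell_1\cdots\ell_q}.$$ *)

theory Defs
  imports "HOL-Analysis.Analysis"
begin

text \<open>Riemann zeta at an integer argument s (meaningful for s >= 2):
  zeta(s) = sum over m >= 1 of 1/m^s.\<close>
definition rzeta :: "nat \<Rightarrow> real" where
  "rzeta s = (\<Sum>m. 1 / (real (Suc m)) ^ s)"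

definition Hsum :: "nat \<Rightarrow> nat \<Rightarrow> real" where
  "Hsum q m = (\<Sum>ls\<in>{ls. length ls = q \<and> sorted ls \<and> set ls \<subseteq> {1..m}}.
                  1 / (\<Prod>l\<leftarrow>ls. real l))"

definition Gidx :: "nat \<Rightarrow> nat list set" where
  "Gidx p = {ks. length ks = Suc p \<and> sorted_wrt (<) ks \<and> 0 \<notin> set ks}"

definition Gterm :: "nat \<Rightarrow> nat \<Rightarrow> nat list \<Rightarrow> real" where
  "Gterm n q ks = 1 / (\<Prod>k\<leftarrow>butlast ks. real k) / (real (last ks)) ^ (n + 2)
                    * Hsum q (last ks)"

text \<open>G n p q stands for the paper's G_{n+2}(p,q).\<close>
definition G :: "nat \<Rightarrow> nat \<Rightarrow> nat \<Rightarrow> real" where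
  "G n p q = (\<Sum>\<^sub>\<infinity>ks\<in>Gidx p. Gterm n q ks)"

end

(* For n >= 0 let D_r(k,n) = k!/((n+1)...(n+k)) times the sum of 1/((n+l_1)...(n+l_r)) over
   1 <= l_1 <= ... <= l_r <= k; it satisfies the recursion by which Dsum is defined below, and
   D_r(k,0) is the inner sum of G. Put U_r(k,n) = sum_{s<=r} D_s(k,n)/n^(r-s+1). Two telescoping
   identities drive the proof:
     D_r(k+1,n)/(k+1) = U_r(k,n) - U_r(k+1,n)   (n >= 1),
     (k+1) U_r(k+1,n+1) = D_r(k+1,n) - D_r(k+1,n+1).
   Summing the first over k > a and iterating along chains 0 < k_1 < ... < k_p < k shows that, for
   every n >= 1, the sum over k of e_p(k) U_q(k,n)/k, with e_p(k) the sum of 1/(k_1...k_p) over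
   such chains, is the (p+2)-fold geometric convolution of the unit vector at q, namely
   binom(p+q+1,q)/n^(p+q+2). Summing the second over n gives D_q(k,0)/k for the sum of U_q(k,n).
   Exchanging the two summations (all terms are nonnegative) gives G_2(p,q) = binom(p+q+1,q)
   zeta(p+q+2), and the duality is the symmetry of the binomial coefficient. The limits required
   by the telescoping come from D_r(k,n) <= 2^r prod_{j<=k} j/(j+n-1/2). *)

theory Submission
  imports Defs "HOL-Real_Asymp.Real_Asymp"
begin

lemma sums_imp_has_sum_greaterThan:
  fixes f :: "nat \<Rightarrow> real"
  assumes "(\<lambda>i. f (Suc (a + i))) sums S" and "\<And>k. k > a \<Longrightarrow> f k \<ge> 0"
  shows "(f has_sum S) {a<..}"
proof -
  have "((\<lambda>i. f (Suc (a + i))) has_sum S) UNIV"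
    using assms by (intro sums_nonneg_imp_has_sum) auto
  also have "?this \<longleftrightarrow> (f has_sum S) {a<..}"
    by (rule has_sum_reindex_bij_witness[where i = "\<lambda>k. k - Suc a" and j = "\<lambda>i. Suc (a + i)"]) auto
  finally show ?thesis .
qed

lemma has_sum_Sigma_nonneg:
  fixes f :: "'a \<times> 'b \<Rightarrow> real"
  assumes "\<And>x. x \<in> A \<Longrightarrow> ((\<lambda>y. f (x, y)) has_sum g x) (B x)" and "(g has_sum S) A"
    and "\<And>x y. x \<in> A \<Longrightarrow> y \<in> B x \<Longrightarrow> f (x, y) \<ge> 0"
  shows "(f has_sum S) (Sigma A B)"
proof -
  have "f summable_on Sigma A B"
    by (rule summable_on_SigmaI[where g = g]) (use assms in \<open>auto intro: has_sum_imp_summable\<close>)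
  then show ?thesis
    by (intro has_sum_SigmaI[where g = g]) (use assms in auto)
qed

lemma has_sum_swap_nonneg:
  fixes f :: "'a \<Rightarrow> 'b \<Rightarrow> real"
  assumes "\<And>x. x \<in> A \<Longrightarrow> (f x has_sum g x) (B x)" and "(g has_sum S) A"
    and "\<And>x y. x \<in> A \<Longrightarrow> y \<in> B x \<Longrightarrow> f x y \<ge> 0"
    and "\<And>y. y \<in> C \<Longrightarrow> ((\<lambda>x. f x y) has_sum h y) (D y)"
    and "\<And>x y. x \<in> A \<and> y \<in> B x \<longleftrightarrow> y \<in> C \<and> x \<in> D y"
  shows "(h has_sum S) C"
proof -
  have "((\<lambda>(x, y). f x y) has_sum S) (Sigma A B)"
    by (rule has_sum_Sigma_nonneg[OF _ assms(2)]) (use assms(1,3) in auto)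
  also have "?this \<longleftrightarrow> ((\<lambda>(y, x). f x y) has_sum S) (Sigma C D)"
    by (rule has_sum_reindex_bij_witness[where i = "\<lambda>(y, x). (x, y)" and j = "\<lambda>(x, y). (y, x)"])
       (use assms(5) in auto)
  finally show ?thesis
    by (rule has_sum_SigmaD) (use assms(4) in auto)
qed

lemma finite_lists_length_subset: "finite A \<Longrightarrow> finite {xs. length xs = p \<and> P xs \<and> set xs \<subseteq> A}"
  by (rule finite_subset[OF _ finite_lists_length_eq[of A p]]) auto

lemma prod_list_of_nat_nonneg: "0 \<le> (\<Prod>x\<leftarrow>xs. real x)"
  by (induction xs) auto

lemma rzeta_has_sum:
  assumes "s \<ge> 2"
  shows "((\<lambda>n. 1 / real n ^ s) has_sum rzeta s) {0<..}"
proof (rule sums_imp_has_sum_greaterThan)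
  have "summable (\<lambda>m. inverse (real (Suc m) ^ s))"
    using inverse_power_summable[OF assms] by (subst summable_Suc_iff)
  then show "(\<lambda>i. 1 / real (Suc (0 + i)) ^ s) sums rzeta s"
    unfolding rzeta_def by (simp add: summable_sums inverse_eq_divide)
qed simp

fun Dsum :: "nat \<Rightarrow> nat \<Rightarrow> nat \<Rightarrow> real" where
  "Dsum r 0 n = (if r = 0 then 1 else 0)"
| "Dsum 0 (Suc k) n = real (Suc k) * Dsum 0 k n / real (Suc k + n)"
| "Dsum (Suc r) (Suc k) n = (real (Suc k) * Dsum (Suc r) k n + Dsum r (Suc k) n) / real (Suc k + n)"

primrec gconv :: "nat \<Rightarrow> (nat \<Rightarrow> real) \<Rightarrow> nat \<Rightarrow> real" where
  "gconv n X 0 = X 0 / real n"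
| "gconv n X (Suc r) = (X (Suc r) + gconv n X r) / real n"

definition Usum :: "nat \<Rightarrow> nat \<Rightarrow> nat \<Rightarrow> real" where
  "Usum r k n = gconv n (\<lambda>s. Dsum s k n) r"

lemma Dsum_nonneg: "Dsum r k n \<ge> 0"
  by (induction r k n rule: Dsum.induct) auto

lemma gconv_nonneg: "(\<And>s. X s \<ge> 0) \<Longrightarrow> gconv n X r \<ge> 0"
  by (induction r) auto

lemma Usum_nonneg: "Usum r k n \<ge> 0"
  unfolding Usum_def by (intro gconv_nonneg Dsum_nonneg)

lemma Dsum_0_Suc: "real (Suc k + n) * Dsum 0 (Suc k) n = real (Suc k) * Dsum 0 k n"
  by simp

lemma Dsum_Suc_Suc:
  "real (Suc k + n) * Dsum (Suc r) (Suc k) n = real (Suc k) * Dsum (Suc r) k n + Dsum r (Suc k) n"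
  by simp

declare Dsum.simps(2,3) [simp del]

lemma Dsum_eq_Usum_diff:
  assumes "n > 0"
  shows "Dsum r (Suc k) n = real (Suc k) * (Usum r k n - Usum r (Suc k) n)"
proof (induction r)
  case 0
  have "real n * Dsum 0 (Suc k) n = real (Suc k) * (Dsum 0 k n - Dsum 0 (Suc k) n)"
    using Dsum_0_Suc[of k n] by (simp add: algebra_simps)
  with assms show ?case
    unfolding Usum_def by (simp add: field_simps)
next
  case (Suc r)
  have "real (Suc k) * (Usum (Suc r) k n - Usum (Suc r) (Suc k) n)
      = (real (Suc k) * (Dsum (Suc r) k n - Dsum (Suc r) (Suc k) n)
         + real (Suc k) * (Usum r k n - Usum r (Suc k) n)) / real n"
    using assms unfolding Usum_def by (simp add: field_simps)
  also have "\<dots> = (real (Suc k) * (Dsum (Suc r) k n - Dsum (Suc r) (Suc k) n) + Dsum r (Suc k) n) / real n"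
    using Suc.IH by simp
  also have "\<dots> = Dsum (Suc r) (Suc k) n"
    using assms Dsum_Suc_Suc[of k n r] by (simp add: field_simps)
  finally show ?case ..
qed

lemma Dsum_Suc_eq_Usum_step:
  fixes D D' A B T P :: real and k n :: nat
  assumes "real (Suc (Suc k) + n) * D' = real (Suc (Suc k)) * D + real (Suc (Suc k)) * P"
    and "D = real (Suc k) * A" and "T = real (Suc k) * (A - B)" and "real (Suc n) * B = T + P"
  shows "D' = real (Suc (Suc k)) * B"
proof -
  have "real (Suc (Suc k) + n) * D' = real (Suc (Suc k)) * (real (Suc k) * A + P)"
    using assms(1,2) by (simp add: algebra_simps)
  also have "real (Suc k) * A + P = real (Suc (Suc k) + n) * B"
    using assms(3,4) by (simp add: algebra_simps)
  finally show ?thesis by simp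
qed

lemma Dsum_Suc_eq_Usum: "Dsum r (Suc k) n = real (Suc k) * Usum r k (Suc n)"
proof (induction r arbitrary: k)
  case 0
  show ?case
  proof (induction k)
    case 0
    show ?case by (simp add: Usum_def Dsum.simps)
  next
    case (Suc k)
    have rec: "real (Suc (Suc k) + n) * Dsum 0 (Suc (Suc k)) n
        = real (Suc (Suc k)) * Dsum 0 (Suc k) n + real (Suc (Suc k)) * 0"
      using Dsum_0_Suc[of "Suc k" n] by simp
    have conv: "real (Suc n) * Usum 0 (Suc k) (Suc n) = Dsum 0 (Suc k) (Suc n) + 0"
      by (simp add: Usum_def)
    show ?case
      by (rule Dsum_Suc_eq_Usum_step[OF rec Suc.IH Dsum_eq_Usum_diff conv]) simp
  qed
next
  case (Suc r)
  note IH_r = Suc.IH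
  show ?case
  proof (induction k)
    case 0
    show ?case using IH_r[of 0] by (simp add: Usum_def Dsum.simps)
  next
    case (Suc k)
    have rec: "real (Suc (Suc k) + n) * Dsum (Suc r) (Suc (Suc k)) n
        = real (Suc (Suc k)) * Dsum (Suc r) (Suc k) n + real (Suc (Suc k)) * Usum r (Suc k) (Suc n)"
      using Dsum_Suc_Suc[of "Suc k" n r] IH_r by simp
    have conv: "real (Suc n) * Usum (Suc r) (Suc k) (Suc n)
        = Dsum (Suc r) (Suc k) (Suc n) + Usum r (Suc k) (Suc n)"
      by (simp add: Usum_def)
    show ?case
      by (rule Dsum_Suc_eq_Usum_step[OF rec Suc.IH Dsum_eq_Usum_diff conv]) simp
  qed
qed

lemma Dsum_diff_Suc_right:
  "Dsum r (Suc k) n - Dsum r (Suc k) (Suc n) = real (Suc k) * Usum r (Suc k) (Suc n)"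
  using Dsum_eq_Usum_diff[of "Suc n" r k] Dsum_Suc_eq_Usum[of r k n] by (simp add: algebra_simps)

(* The shift by 1/2 absorbs the lower-order term in the recursion of Dsum, which makes
   Dsum_le_Qprod inductive. *)
definition Qprod :: "nat \<Rightarrow> nat \<Rightarrow> real" where
  "Qprod k n = (\<Prod>j=1..k. real j / (real j + real n - 1/2))"

lemma Qprod_0 [simp]: "Qprod 0 n = 1"
  by (simp add: Qprod_def)

lemma Qprod_Suc: "Qprod (Suc k) n = Qprod k n * real (Suc k) / (real (Suc k) + real n - 1/2)"
  by (simp add: Qprod_def)

lemma Qprod_pos: "Qprod k n > 0"
  unfolding Qprod_def by (intro prod_pos) auto

lemma Dsum_le_Qprod: "Dsum r k n \<le> 2 ^ r * Qprod k n"
proof (induction r k n rule: Dsum.induct)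
  case (1 r n)
  then show ?case by simp
next
  case (2 k n)
  have "Dsum 0 (Suc k) n = real (Suc k) * Dsum 0 k n / real (Suc k + n)"
    by (simp add: Dsum.simps)
  also have "\<dots> \<le> real (Suc k) * Qprod k n / real (Suc k + n)"
    using 2 by (intro divide_right_mono mult_left_mono) auto
  also have "\<dots> \<le> real (Suc k) * Qprod k n / (real (Suc k) + real n - 1/2)"
    using Qprod_pos[of k n] by (intro divide_left_mono) auto
  finally show ?case by (simp add: Qprod_Suc mult.commute)
next
  case (3 r k n)
  define d where "d = real (Suc k) + real n - 1/2"
  have d: "d > 0" "real (Suc k + n) = d + 1/2"
    by (simp_all add: d_def)
  have Q: "real (Suc k) * Qprod k n = d * Qprod (Suc k) n"
    using d by (simp add: Qprod_Suc d_def)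
  have "Dsum (Suc r) (Suc k) n = (real (Suc k) * Dsum (Suc r) k n + Dsum r (Suc k) n) / real (Suc k + n)"
    by (simp add: Dsum.simps)
  also have "\<dots> \<le> (real (Suc k) * (2 ^ Suc r * Qprod k n) + 2 ^ r * Qprod (Suc k) n) / real (Suc k + n)"
    using 3 by (intro divide_right_mono add_mono mult_left_mono) auto
  also have "\<dots> = (2 ^ Suc r * (d * Qprod (Suc k) n) + 2 ^ r * Qprod (Suc k) n) / (d + 1/2)"
    by (simp only: d(2) flip: Q) (simp add: algebra_simps)
  also have "\<dots> = 2 ^ Suc r * Qprod (Suc k) n"
    using d(1) by (simp add: field_simps)
  finally show ?case .
qed

lemma Qprod_squared_le:
  assumes "n \<ge> 1"
  shows "(Qprod k n)\<^sup>2 \<le> 1 / (real k + 1)"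
proof (induction k)
  case 0
  then show ?case by simp
next
  case (Suc k)
  have "(Qprod (Suc k) n)\<^sup>2 = (Qprod k n)\<^sup>2 * (real (Suc k))\<^sup>2 / (real (Suc k) + real n - 1/2)\<^sup>2"
    by (simp add: Qprod_Suc power_mult_distrib power_divide)
  also have "\<dots> \<le> 1 / (real k + 1) * (real (Suc k))\<^sup>2 / (real k + 3/2)\<^sup>2"
  proof (rule divide_mono)
    show "(real k + 3/2)\<^sup>2 \<le> (real (Suc k) + real n - 1/2)\<^sup>2"
      using assms by (intro power_mono) auto
    show "(Qprod k n)\<^sup>2 * (real (Suc k))\<^sup>2 \<le> 1 / (real k + 1) * (real (Suc k))\<^sup>2"
      using Suc.IH by (rule mult_right_mono) simp
  qed auto
  also have "\<dots> = (real k + 1) / (real k + 3/2)\<^sup>2"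
    by (simp add: power2_eq_square add.commute)
  also have "\<dots> \<le> 1 / (real (Suc k) + 1)"
    by (simp add: divide_simps power2_eq_square algebra_simps add_pos_nonneg)
  finally show ?case .
qed

lemma Qprod_tendsto_zero_left:
  assumes "n \<ge> 1"
  shows "(\<lambda>k. Qprod k n) \<longlonglongrightarrow> 0"
proof (rule tendsto_sandwich[of "\<lambda>_. 0" _ _ "\<lambda>k. sqrt (1 / (real k + 1))"])
  have "Qprod k n \<le> sqrt (1 / (real k + 1))" for k
    using real_sqrt_le_mono[OF Qprod_squared_le[OF assms, of k]] Qprod_pos[of k n] by simp
  then show "\<forall>\<^sub>F k in sequentially. Qprod k n \<le> sqrt (1 / (real k + 1))"
    by simp
  show "(\<lambda>k. sqrt (1 / (real k + 1))) \<longlonglongrightarrow> 0"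
    by real_asymp
qed (simp_all add: less_imp_le[OF Qprod_pos])

lemma Qprod_Suc_le:
  assumes "n \<ge> 1"
  shows "Qprod (Suc k) n \<le> 1 / (real n + 1/2)"
proof (induction k)
  case 0
  then show ?case by (simp add: Qprod_Suc add.commute)
next
  case (Suc k)
  have "Qprod (Suc (Suc k)) n = Qprod (Suc k) n * (real (Suc (Suc k)) / (real (Suc (Suc k)) + real n - 1/2))"
    by (simp add: Qprod_Suc)
  also have "\<dots> \<le> Qprod (Suc k) n"
    using Qprod_pos[of "Suc k" n] assms by (intro mult_left_le) auto
  finally show ?case using Suc.IH by simp
qed

lemma Qprod_tendsto_zero_right: "(\<lambda>n. Qprod (Suc k) n) \<longlonglongrightarrow> 0"
proof (rule tendsto_sandwich[of "\<lambda>_. 0" _ _ "\<lambda>n. 1 / (real n + 1/2)"])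
  show "\<forall>\<^sub>F n in sequentially. Qprod (Suc k) n \<le> 1 / (real n + 1/2)"
    using eventually_ge_at_top[of 1] by eventually_elim (rule Qprod_Suc_le)
  show "(\<lambda>n. 1 / (real n + 1/2)) \<longlonglongrightarrow> 0"
    by real_asymp
qed (simp_all add: less_imp_le[OF Qprod_pos])

lemma Dsum_tendsto_zero:
  assumes "(\<lambda>x. Qprod (k x) (n x)) \<longlonglongrightarrow> 0"
  shows "(\<lambda>x. Dsum r (k x) (n x)) \<longlonglongrightarrow> 0"
  using Dsum_nonneg Dsum_le_Qprod
  by (intro tendsto_sandwich[OF _ _ tendsto_const tendsto_mult_right_zero[OF assms, of "2 ^ r"]]) auto

lemma Usum_tendsto_zero:
  assumes "n \<ge> 1"
  shows "(\<lambda>k. Usum r k n) \<longlonglongrightarrow> 0"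
  using Dsum_tendsto_zero[OF Qprod_tendsto_zero_left[OF assms]] unfolding Usum_def
  by (induction r) (simp_all add: tendsto_divide_zero tendsto_add_zero)

lemma has_sum_Dsum_div:
  assumes "n \<ge> 1"
  shows "((\<lambda>k. Dsum r k n / real k) has_sum Usum r a n) {a<..}"
proof (rule sums_imp_has_sum_greaterThan)
  have "(\<lambda>i. Usum r (a + i) n) \<longlonglongrightarrow> 0"
    using LIMSEQ_ignore_initial_segment[OF Usum_tendsto_zero[OF assms], of r a]
    by (simp add: add.commute)
  then have "(\<lambda>i. Usum r (a + i) n - Usum r (Suc (a + i)) n) sums Usum r a n"
    using telescope_sums' by fastforce
  moreover have "Usum r (a + i) n - Usum r (Suc (a + i)) n = Dsum r (Suc (a + i)) n / real (Suc (a + i))" for i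
    using Dsum_eq_Usum_diff[of n r "a + i"] assms by (simp add: field_simps)
  ultimately show "(\<lambda>i. Dsum r (Suc (a + i)) n / real (Suc (a + i))) sums Usum r a n"
    by simp
qed (simp add: Dsum_nonneg)

lemma has_sum_Usum_Suc:
  "((\<lambda>n. Usum r (Suc k) n) has_sum Dsum r (Suc k) 0 / real (Suc k)) {0<..}"
proof (rule sums_imp_has_sum_greaterThan)
  have "(\<lambda>i. Dsum r (Suc k) i - Dsum r (Suc k) (Suc i)) sums Dsum r (Suc k) 0"
    using telescope_sums'[OF Dsum_tendsto_zero[OF Qprod_tendsto_zero_right]] by simp
  then have "(\<lambda>i. (Dsum r (Suc k) i - Dsum r (Suc k) (Suc i)) / real (Suc k)) sums (Dsum r (Suc k) 0 / real (Suc k))"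
    by (rule sums_divide)
  then show "(\<lambda>i. Usum r (Suc k) (Suc (0 + i))) sums (Dsum r (Suc k) 0 / real (Suc k))"
    by (simp add: Dsum_diff_Suc_right)
qed (rule Usum_nonneg)

lemma has_sum_gconv:
  assumes "\<And>s. ((\<lambda>k. X k s) has_sum Y s) A"
  shows "((\<lambda>k. gconv n (X k) r) has_sum gconv n Y r) A"
proof (induction r)
  case 0
  show ?case using has_sum_divide_const[OF assms[of 0]] by simp
next
  case (Suc r)
  show ?case using has_sum_divide_const[OF has_sum_add[OF assms[of "Suc r"] Suc.IH]] by simp
qed

lemma gconv_divide: "gconv n (\<lambda>s. X s / c) r = gconv n X r / c"
  by (induction r) (simp_all add: add_divide_distrib mult.commute)

lemma gconv_iter_nonneg: "(\<And>s. X s \<ge> 0) \<Longrightarrow> (gconv n ^^ m) X r \<ge> 0"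
  by (induction m arbitrary: r) (simp_all add: gconv_nonneg)

lemma gconv_iter_delta:
  "(gconv n ^^ Suc m) (\<lambda>s. if s = 0 then 1 else 0) r = real ((r + m) choose r) / real n ^ (r + m + 1)"
proof (induction m arbitrary: r)
  case 0
  show ?case by (induction r) simp_all
next
  case (Suc m)
  define W where "W = (gconv n ^^ Suc m) (\<lambda>s. if s = 0 then 1 else 0)"
  have W_eq: "W r = real ((r + m) choose r) / real n ^ (r + m + 1)" for r
    unfolding W_def by (rule Suc.IH)
  have "gconv n W r = real ((r + Suc m) choose r) / real n ^ (r + Suc m + 1)"
  proof (induction r)
    case 0
    show ?case using W_eq[of 0] by simp
  next
    case (Suc r)
    then show ?case
      using W_eq[of "Suc r"] by (simp add: add_divide_distrib ac_simps)
  qed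
  then show ?case
    by (simp only: W_def funpow.simps(2) o_apply)
qed

lemma has_sum_gconv_iter_Dsum:
  assumes "n \<ge> 1"
  shows "((\<lambda>k. (gconv n ^^ m) (\<lambda>s. Dsum s k n) r / real k) has_sum (gconv n ^^ Suc m) (\<lambda>s. Dsum s a n) r) {a<..}"
proof (induction m arbitrary: r)
  case 0
  show ?case using has_sum_Dsum_div[OF assms] by (simp add: Usum_def)
next
  case (Suc m)
  have "((\<lambda>k. gconv n (\<lambda>s. (gconv n ^^ m) (\<lambda>s. Dsum s k n) s / real k) r) has_sum
         gconv n ((gconv n ^^ Suc m) (\<lambda>s. Dsum s a n)) r) {a<..}"
    by (rule has_sum_gconv) (rule Suc.IH)
  then show ?case by (simp add: gconv_divide)
qed

definition strict_chains :: "nat \<Rightarrow> nat \<Rightarrow> nat \<Rightarrow> nat list set" where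
  "strict_chains p a k = {xs. length xs = p \<and> sorted_wrt (<) xs \<and> set xs \<subseteq> {a<..<k}}"

definition esum :: "nat \<Rightarrow> nat \<Rightarrow> nat \<Rightarrow> real" where
  "esum p a k = (\<Sum>xs\<in>strict_chains p a k. 1 / (\<Prod>x\<leftarrow>xs. real x))"

lemma finite_strict_chains: "finite (strict_chains p a k)"
  unfolding strict_chains_def by (intro finite_lists_length_subset) simp

lemma esum_0 [simp]: "esum 0 a k = 1"
proof -
  have "strict_chains 0 a k = {[]}"
    by (auto simp: strict_chains_def)
  then show ?thesis by (simp add: esum_def)
qed

lemma esum_nonneg: "esum p a k \<ge> 0"
  unfolding esum_def by (intro sum_nonneg) (simp add: prod_list_of_nat_nonneg)

lemma esum_Suc: "esum (Suc p) a k = (\<Sum>j\<in>{a<..<k}. esum p j k / real j)"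
proof -
  have "esum (Suc p) a k = (\<Sum>(j, ys)\<in>Sigma {a<..<k} (\<lambda>j. strict_chains p j k). 1 / (\<Prod>x\<leftarrow>j # ys. real x))"
    unfolding esum_def
    by (rule sum.reindex_bij_witness[where i = "\<lambda>(j, ys). j # ys" and j = "\<lambda>xs. (hd xs, tl xs)"])
       (auto simp: strict_chains_def length_Suc_conv subset_iff)
  also have "\<dots> = (\<Sum>j\<in>{a<..<k}. \<Sum>ys\<in>strict_chains p j k. 1 / (\<Prod>x\<leftarrow>j # ys. real x))"
    by (rule sum.Sigma[symmetric]) (auto simp: finite_strict_chains)
  also have "\<dots> = (\<Sum>j\<in>{a<..<k}. esum p j k / real j)"
    unfolding esum_def by (simp add: sum_divide_distrib mult.commute)
  finally show ?thesis .
qed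

lemma has_sum_esum_gconv_iter:
  assumes "n \<ge> 1"
  shows "((\<lambda>k. esum p a k * ((gconv n ^^ m) (\<lambda>s. Dsum s k n) r / real k)) has_sum
           (gconv n ^^ (m + p + 1)) (\<lambda>s. Dsum s a n) r) {a<..}"
proof (induction p arbitrary: a m)
  case 0
  show ?case using has_sum_gconv_iter_Dsum[OF assms] by simp
next
  case (Suc p)
  define W where "W k = (gconv n ^^ m) (\<lambda>s. Dsum s k n) r / real k" for k
  have "((\<lambda>k. \<Sum>j\<in>{a<..<k}. esum p j k * W k / real j) has_sum (gconv n ^^ (m + Suc p + 1)) (\<lambda>s. Dsum s a n) r) {a<..}"
  proof (rule has_sum_swap_nonneg[where f = "\<lambda>j k. esum p j k * W k / real j" and B = "\<lambda>j. {j<..}"])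
    show "((\<lambda>k. esum p j k * W k / real j) has_sum (gconv n ^^ (m + p + 1)) (\<lambda>s. Dsum s j n) r / real j) {j<..}" for j
      using has_sum_divide_const[OF Suc.IH[of j m]] by (simp add: W_def)
    show "((\<lambda>j. (gconv n ^^ (m + p + 1)) (\<lambda>s. Dsum s j n) r / real j) has_sum (gconv n ^^ (m + Suc p + 1)) (\<lambda>s. Dsum s a n) r) {a<..}"
      using has_sum_gconv_iter_Dsum[OF assms, of "m + p + 1"] by simp
    show "esum p j k * W k / real j \<ge> 0" for j k
      unfolding W_def by (intro divide_nonneg_nonneg mult_nonneg_nonneg esum_nonneg gconv_iter_nonneg Dsum_nonneg) simp_all
    show "((\<lambda>j. esum p j k * W k / real j) has_sum (\<Sum>j\<in>{a<..<k}. esum p j k * W k / real j)) {a<..<k}" for k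
      by (rule has_sum_finite) simp
  qed auto
  moreover have "(\<Sum>j\<in>{a<..<k}. esum p j k * W k / real j) = esum (Suc p) a k * W k" for k
    by (simp add: esum_Suc sum_distrib_right)
  ultimately show ?case by (simp add: W_def)
qed

lemma has_sum_esum_Usum:
  assumes "n \<ge> 1"
  shows "((\<lambda>k. esum p 0 k * (Usum q k n / real k)) has_sum real ((p + q + 1) choose q) / real n ^ (p + q + 2)) {0<..}"
proof -
  have "(\<lambda>s. Dsum s 0 n) = (\<lambda>s. if s = 0 then 1 else 0)"
    by simp
  then have "(gconv n ^^ Suc (p + 1)) (\<lambda>s. Dsum s 0 n) q = real ((q + (p + 1)) choose q) / real n ^ (q + (p + 1) + 1)"
    by (simp only: gconv_iter_delta)
  then have "(gconv n ^^ (1 + p + 1)) (\<lambda>s. Dsum s 0 n) q = real ((p + q + 1) choose q) / real n ^ (p + q + 2)"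
    by (simp add: ac_simps)
  with has_sum_esum_gconv_iter[OF assms, where p = p and a = 0 and m = 1 and r = q] show ?thesis
    by (simp add: Usum_def)
qed

lemma has_sum_esum_Dsum:
  "((\<lambda>k. esum p 0 k * (Dsum q k 0 / real k / real k)) has_sum real ((p + q + 1) choose q) * rzeta (p + q + 2)) {0<..}"
proof (rule has_sum_swap_nonneg[where f = "\<lambda>n k. esum p 0 k * (Usum q k n / real k)" and B = "\<lambda>_. {0<..}"])
  show "((\<lambda>k. esum p 0 k * (Usum q k n / real k)) has_sum real ((p + q + 1) choose q) * (1 / real n ^ (p + q + 2))) {0<..}"
    if "n \<in> {0<..}" for n
    using has_sum_esum_Usum[of n p q] that by simp
  show "((\<lambda>n. real ((p + q + 1) choose q) * (1 / real n ^ (p + q + 2))) has_sum real ((p + q + 1) choose q) * rzeta (p + q + 2)) {0<..}"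
    by (intro has_sum_cmult_right rzeta_has_sum) simp
  show "((\<lambda>n. esum p 0 k * (Usum q k n / real k)) has_sum esum p 0 k * (Dsum q k 0 / real k / real k)) {0<..}"
    if "k \<in> {0<..}" for k
  proof -
    from that obtain k' where k: "k = Suc k'"
      using gr0_implies_Suc by auto
    show ?thesis
      unfolding k by (intro has_sum_cmult_right has_sum_divide_const has_sum_Usum_Suc)
  qed
  show "0 \<le> esum p 0 k * (Usum q k n / real k)" for n k
    by (intro mult_nonneg_nonneg divide_nonneg_nonneg esum_nonneg Usum_nonneg) simp
qed auto

lemma Dsum_0_right_Suc: "Dsum (Suc r) m 0 = (\<Sum>x\<in>{1..m}. Dsum r x 0 / real x)"
  by (induction m) (simp_all add: Dsum.simps add_divide_distrib del: of_nat_Suc)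

lemma Hsum_Suc: "Hsum (Suc r) m = (\<Sum>x\<in>{1..m}. Hsum r x / real x)"
proof -
  define L where "L r m = {ls :: nat list. length ls = r \<and> sorted ls \<and> set ls \<subseteq> {1..m}}" for r m
  have "Hsum (Suc r) m = (\<Sum>(x, ls)\<in>Sigma {1..m} (L r). 1 / (\<Prod>l\<leftarrow>ls @ [x]. real l))"
    unfolding Hsum_def
    by (rule sum.reindex_bij_witness[where i = "\<lambda>(x, ls). ls @ [x]" and j = "\<lambda>xs. (last xs, butlast xs)"])
       (force simp: L_def length_Suc_conv_rev subset_iff sorted_append)+
  also have "\<dots> = (\<Sum>x\<in>{1..m}. \<Sum>ls\<in>L r x. 1 / (\<Prod>l\<leftarrow>ls @ [x]. real l))"
    by (rule sum.Sigma[symmetric]) (auto simp: L_def intro: finite_lists_length_subset)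
  also have "\<dots> = (\<Sum>x\<in>{1..m}. Hsum r x / real x)"
    by (simp add: Hsum_def L_def sum_divide_distrib)
  finally show ?thesis .
qed

lemma Hsum_eq_Dsum: "Hsum r m = Dsum r m 0"
proof (induction r arbitrary: m)
  case 0
  have "{ls :: nat list. length ls = 0 \<and> sorted ls \<and> set ls \<subseteq> {1..m}} = {[]}"
    by auto
  moreover have "Dsum 0 m 0 = 1"
    by (induction m) (simp_all add: Dsum.simps)
  ultimately show ?case by (simp add: Hsum_def)
next
  case (Suc r)
  then show ?case by (simp add: Hsum_Suc Dsum_0_right_Suc)
qed

lemma Gterm_snoc: "Gterm 0 q (xs @ [k]) = 1 / (\<Prod>x\<leftarrow>xs. real x) * (Dsum q k 0 / real k / real k)"
  by (simp add: Gterm_def Hsum_eq_Dsum power2_eq_square)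

lemma Gidx_snoc_iff: "ks \<in> Gidx p \<longleftrightarrow> (\<exists>xs k. ks = xs @ [k] \<and> k > 0 \<and> xs \<in> strict_chains p 0 k)"
  by (auto simp: Gidx_def strict_chains_def length_Suc_conv_rev sorted_wrt_append subset_iff intro: gr0I)

lemma has_sum_Gterm: "(Gterm 0 q has_sum real ((p + q + 1) choose q) * rzeta (p + q + 2)) (Gidx p)"
proof -
  let ?S = "real ((p + q + 1) choose q) * rzeta (p + q + 2)"
  have "((\<lambda>(k, xs). Gterm 0 q (xs @ [k])) has_sum ?S) (Sigma {0<..} (strict_chains p 0))"
  proof (rule has_sum_Sigma_nonneg[OF _ has_sum_esum_Dsum])
    fix k :: nat
    show "((\<lambda>xs. case (k, xs) of (k, xs) \<Rightarrow> Gterm 0 q (xs @ [k])) has_sum esum p 0 k * (Dsum q k 0 / real k / real k)) (strict_chains p 0 k)"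
      by (rule has_sum_finiteI[OF finite_strict_chains]) (simp only: Gterm_snoc esum_def sum_distrib_right prod.case)
  next
    fix k xs
    show "0 \<le> (case (k, xs) of (k, xs) \<Rightarrow> Gterm 0 q (xs @ [k]))"
      using prod_list_of_nat_nonneg[of xs] Dsum_nonneg[of q k 0] by (simp add: Gterm_snoc)
  qed
  also have "?this \<longleftrightarrow> (Gterm 0 q has_sum ?S) (Gidx p)"
    by (rule has_sum_reindex_bij_witness[where j = "\<lambda>(k, xs). xs @ [k]" and i = "\<lambda>ks. (last ks, butlast ks)"])
       (auto simp: Gidx_snoc_iff)
  finally show ?thesis .
qed

theorem proposition2p5:
  fixes p q :: nat
  shows "Gterm 0 q summable_on Gidx p \<and>
         G 0 p q = real ((p + q + 1) choose q) * rzeta (p + q + 2) \<and>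
         (q \<ge> 1 \<longrightarrow> G 0 p q = G 0 (q - 1) (p + 1))"
proof (intro conjI impI)
  show "Gterm 0 q summable_on Gidx p"
    using has_sum_Gterm by (rule has_sum_imp_summable)
  have G_eq: "G 0 p' q' = real ((p' + q' + 1) choose q') * rzeta (p' + q' + 2)" for p' q'
    unfolding G_def using has_sum_Gterm by (rule infsumI)
  then show "G 0 p q = real ((p + q + 1) choose q) * rzeta (p + q + 2)" .
  assume "q \<ge> 1"
  then obtain q' where q: "q = Suc q'"
    using not0_implies_Suc by fastforce
  have "(p + q + 1) choose q = (p + q + 1) choose (p + 1)"
    using binomial_symmetric[of q "p + q + 1"] by simp
  then show "G 0 p q = G 0 (q - 1) (p + 1)"
    by (simp add: G_eq q algebra_simps)
qed

end
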